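(* Let $q$ be a prime power and $(\delta_T,\delta_X)\in\mathbb{Z}\times\mathbb{N}$ with $\delta=\delta_T+\eta\delta_X\ge0$. If $\eta=0$, then $\dim C_0(\delta_T,\delta_X)=(\min(\delta_T,q)+1)(\min(\delta_X,q)+1)$. If $\eta\ge2$, set $A=\delta_X$ if $\delta_T\ge0$ and $A=\delta/\eta$ if $\delta_T<0$; $m=\min(\lfloor A\rfloor,q-1)$; $h=\min(\delta_T,q)+1$ if $\delta_T\ge0$ and $q\le\delta_X$, and $h=0$ otherwise; $s=(\delta-q)/\eta$; and $\tilde s=\lfloor s\rfloor$ if $s\in[0,m]$, $\tilde s=-1$ if $s<0$, $\tilde s=m$ if $s>m$. Then \[\dim C_\eta(\delta_T,\delta_X)=(q+1)(\tilde s+1)+(m-\tilde s)\Big(\delta+1-\eta\,\frac{m+\tilde s+1}{2}\Big)+h.\]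
   Context: $R=\mathbb{F}_q[T_1,T_2,X_1,X_2]$; the bidegree of $T_1^{c_1}T_2^{c_2}X_1^{d_1}X_2^{d_2}$ is $(c_1+c_2-\eta d_1,d_1+d_2)$; $R(\delta_T,\delta_X)$ is the span of monomials of that bidegree. The Hirzebruch surface $\mathcal{H}_\eta$ is the quotient of $(\mathbb{A}^2\setminus\{0\})^2$ by $\mathbb{G}_m^2$ acting by $(\lambda,\mu)\cdot(t_1,t_2,x_1,x_2)=(\lambda t_1,\lambda t_2,\mu\lambda^{-\eta}x_1,\mu x_2)$; each of its $(q+1)^2$ $\mathbb{F}_q$-points has a unique representative $(1,a,1,b)$, $(0,1,1,b)$, $(1,a,0,1)$ or $(0,1,0,1)$ ($a,b\in\mathbb{F}_q$), where polynomials are evaluated. $C_\eta(\delta_T,\delta_X)$ is the image of $F\mapsto(F(P))_{P\in\mathcal{H}_\eta(\mathbb{F}_q)}$ on $R(\delta_T,\delta_X)$. *)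

theory Defs
  imports "HOL-Analysis.Analysis" "HOL-Library.Function_Algebras"
begin

text \<open>Points of P^... written as tuples (t1,t2,x1,x2).  Exponent vectors (c1,c2,d1,d2).\<close>

type_synonym 'a pt4 = "'a \<times> 'a \<times> 'a \<times> 'a"

definition hirz_points :: "'a::{finite,field} pt4 set" where
  "hirz_points =
     {(1,a,1,b) | a b. True} \<union> {(0,1,1,b) | b. True} \<union>
     {(1,a,0,1) | a. True} \<union> {(0,1,0,1)}"

definition bideg_exps :: "nat \<Rightarrow> int \<Rightarrow> nat \<Rightarrow> (nat \<times> nat \<times> nat \<times> nat) set" where
  "bideg_exps \<eta> dT dX =
     {(c1,c2,d1,d2). int c1 + int c2 - int \<eta> * int d1 = dT \<and> d1 + d2 = dX}"

definition mon_eval :: "nat \<times> nat \<times> nat \<times> nat \<Rightarrow> 'a::field pt4 \<Rightarrow> 'a" where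
  "mon_eval e P = (case e of (c1,c2,d1,d2) \<Rightarrow> case P of (t1,t2,x1,x2) \<Rightarrow>
      t1 ^ c1 * t2 ^ c2 * x1 ^ d1 * x2 ^ d2)"

definition hirz_code :: "nat \<Rightarrow> int \<Rightarrow> nat \<Rightarrow> ('a::{finite,field} pt4 \<Rightarrow> 'a) set" where
  "hirz_code \<eta> dT dX =
     {(\<lambda>P. if P \<in> hirz_points then (\<Sum>e\<in>bideg_exps \<eta> dT dX. f e * mon_eval e P) else 0)
      | f. True}"

definition code_dim :: "('a::{finite,field} pt4 \<Rightarrow> 'a) set \<Rightarrow> nat" where
  "code_dim C = vector_space.dim (\<lambda>c (v::'a pt4 \<Rightarrow> 'a) x. c * v x) C"

end

theory Submission
  imports Defs "HOL-Computational_Algebra.Polynomial"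
begin

(* The code is spanned by the evaluations of the monomials of bidegree (dT, dX); such a monomial
   is determined by the exponent j of X2 and the exponent c of T2, its T-degree being
   n_j = \<delta> - \<eta> j.  On the points a positive exponent of T2 or X2 only matters modulo q - 1, and
   a positive exponent of T1 or X1 only through the vanishing at t1 = 0 or x1 = 0.  Hence every
   monomial agrees on the points with a combination of those indexed by J \<times> S(n_j), where
   J = {0..m}, plus j = dX when dT \<ge> 0 and q \<le> dX, and S(n) = {0..min n (q - 1)} \<union> {n}.
   Reducing j > m modulo q - 1 raises the T-degree by a multiple \<eta> t (q - 1); a monomial constant
   in T is then rewritten with 1 = T1^N + T2^N - T1^(N-k) T2^k on P^1(F_q), valid for N \<ge> q and
   k \<equiv> N mod (q - 1), and N \<ge> q is where \<eta> \<noteq> 1 is used.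
   The monomials indexed by J \<times> S(n_j) are linearly independent: evaluating at the points with
   t1, x1 \<in> {0, 1} reduces this twice to the fact that a binary form all of whose exponents but
   the top one are < q vanishes on P^1(F_q) only if it is zero.  So the dimension is the sum of
   min n_j q + 1 over j \<in> J, which evaluates to the closed form. *)

interpretation fun_space: vector_space "\<lambda>(c::'a::field) (v::'b \<Rightarrow> 'a) x. c * v x"
  by unfold_locales (auto simp: fun_eq_iff algebra_simps)

lemma sum_fun_apply: "(\<Sum>i\<in>I. f i) x = (\<Sum>i\<in>I. f i x)"
  by (induction I rule: infinite_finite_induct) auto

lemma (in vector_space) linearly_independent_family:
  assumes "finite X"
    and trivial: "\<And>u x. (\<Sum>y\<in>X. scale (u y) (g y)) = 0 \<Longrightarrow> x \<in> X \<Longrightarrow> u x = 0"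
  shows "inj_on g X" "independent (g ` X)"
proof -
  show inj: "inj_on g X"
  proof (rule inj_onI, rule ccontr)
    fix x y assume xy: "x \<in> X" "y \<in> X" "g x = g y" "x \<noteq> y"
    define u :: "_ \<Rightarrow> 'a" where "u z = (if z = x then 1 else if z = y then -1 else 0)" for z
    have "(\<Sum>z\<in>X. scale (u z) (g z))
        = (\<Sum>z\<in>X. (if z = x then g z else 0) - (if z = y then g z else 0))"
      by (rule sum.cong) (use xy in \<open>auto simp: u_def\<close>)
    also have "\<dots> = 0"
      using xy \<open>finite X\<close> by (simp add: sum_subtractf sum.delta)
    finally have "u x = 0"
      using trivial xy(1) by blast
    then show False
      by (simp add: u_def)
  qed
  show "independent (g ` X)"
    unfolding dependent_finite[OF finite_imageI[OF \<open>finite X\<close>]]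
  proof
    assume "\<exists>u. (\<exists>v\<in>g ` X. u v \<noteq> 0) \<and> (\<Sum>v\<in>g ` X. scale (u v) v) = 0"
    then obtain u x where rel: "(\<Sum>v\<in>g ` X. scale (u v) v) = 0" and "x \<in> X" "u (g x) \<noteq> 0"
      by blast
    have "(\<Sum>y\<in>X. scale (u (g y)) (g y)) = 0"
      using rel by (simp add: sum.reindex[OF inj])
    then show False
      using trivial[of "u \<circ> g" x] \<open>x \<in> X\<close> \<open>u (g x) \<noteq> 0\<close> by simp
  qed
qed

lemma card_finite_field_ge_2: "2 \<le> CARD('a::{finite,field})"
proof -
  have "card {0::'a, 1} \<le> CARD('a)"
    by (rule card_mono) auto
  then show ?thesis
    by simp
qed

lemma power_card_minus_one:
  fixes a :: "'a::{finite,field}"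
  assumes "a \<noteq> 0"
  shows "a ^ (CARD('a) - 1) = 1"
proof -
  let ?U = "UNIV - {0::'a}"
  have "bij_betw (\<lambda>x. a * x) ?U ?U"
    by (rule bij_betwI[where g = "\<lambda>x. x / a"]) (use assms in auto)
  then have "prod (\<lambda>x. a * x) ?U = prod id ?U"
    using prod.reindex_bij_betw[of "\<lambda>x. a * x" ?U ?U id] by simp
  moreover have "prod (\<lambda>x. a * x) ?U = a ^ card ?U * prod id ?U"
    by (simp add: prod.distrib)
  moreover have "prod id ?U \<noteq> 0"
    by (simp add: prod_zero_iff)
  moreover have "card ?U = CARD('a) - 1"
    by (simp add: card_Diff_subset)
  ultimately show ?thesis
    by (metis mult_cancel_right1)
qed

lemma power_add_mult_card_minus_one:
  fixes a :: "'a::{finite,field}"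
  assumes "1 \<le> k"
  shows "a ^ (k + t * (CARD('a) - 1)) = a ^ k"
proof (cases "a = 0")
  case True
  then show ?thesis
    using assms by (simp add: power_0_left)
next
  case False
  have "a ^ (k + t * (CARD('a) - 1)) = a ^ k * (a ^ (CARD('a) - 1)) ^ t"
    by (simp only: power_add power_mult mult.commute[of t])
  then show ?thesis
    using power_card_minus_one[OF False] by simp
qed

lemma exponent_reduction:
  fixes q k :: nat
  assumes "2 \<le> q" "1 \<le> k"
  obtains r t where "1 \<le> r" "r \<le> q - 1" "k = r + t * (q - 1)"
proof
  show "1 \<le> (k - 1) mod (q - 1) + 1"
    by simp
  show "(k - 1) mod (q - 1) + 1 \<le> q - 1"
    using assms(1) mod_less_divisor[of "q - 1" "k - 1"] by linarith
  show "k = (k - 1) mod (q - 1) + 1 + (k - 1) div (q - 1) * (q - 1)"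
    using assms(2) mod_div_mult_eq[of "k - 1" "q - 1"] by linarith
qed

lemma coeff_eq_0_if_vanishes_on_finite_field:
  fixes \<beta> :: "nat \<Rightarrow> 'a::{finite,field}"
  assumes T: "T \<subseteq> {..<CARD('a)}"
    and vanish: "\<And>x. (\<Sum>i\<in>T. \<beta> i * x ^ i) = 0" and "k \<in> T"
  shows "\<beta> k = 0"
proof (rule ccontr)
  assume "\<beta> k \<noteq> 0"
  define p where "p = (\<Sum>i\<in>T. monom (\<beta> i) i)"
  have "finite T"
    using T finite_subset by blast
  have coeff_p: "coeff p i = (if i \<in> T then \<beta> i else 0)" for i
    using \<open>finite T\<close> by (simp add: p_def coeff_sum coeff_monom)
  then have "p \<noteq> 0"
    using \<open>k \<in> T\<close> \<open>\<beta> k \<noteq> 0\<close> by (metis coeff_0)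
  have "degree p \<le> CARD('a) - 1"
    by (rule degree_le) (use T in \<open>auto simp: coeff_p\<close>)
  moreover have "{x. poly p x = 0} = UNIV"
    using vanish by (simp add: p_def poly_sum poly_monom)
  then have "CARD('a) \<le> degree p"
    using card_poly_roots_bound[OF \<open>p \<noteq> 0\<close>] by simp
  ultimately show False
    using card_finite_field_ge_2[where 'a = 'a] by simp
qed

(* A binary form \<Sum> \<mu> i T2^i T1^(n - i), evaluated at (1, a) and at (0, 1). *)
lemma coeff_eq_0_if_vanishes_on_proj_line:
  fixes \<mu> :: "nat \<Rightarrow> 'a::{finite,field}"
  assumes S: "S \<subseteq> {..n}" "S - {n} \<subseteq> {..<CARD('a)}"
    and affine: "\<And>a. (\<Sum>i\<in>S. \<mu> i * a ^ i) = 0"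
    and infinity: "(\<Sum>i\<in>S. \<mu> i * 0 ^ (n - i)) = 0"
    and "k \<in> S"
  shows "\<mu> k = 0"
proof -
  have "finite S"
    using S(1) finite_subset by blast
  have "(\<Sum>i\<in>S. \<mu> i * 0 ^ (n - i)) = (\<Sum>i\<in>S. if i = n then \<mu> i else 0)"
    by (rule sum.cong) (use S(1) in auto)
  then have top: "n \<in> S \<Longrightarrow> \<mu> n = 0"
    using infinity \<open>finite S\<close> by simp
  have "(\<Sum>i\<in>S - {n}. \<mu> i * a ^ i) = 0" for a
    using affine[of a] top \<open>finite S\<close> by (simp add: sum_diff1)
  then show ?thesis
    using coeff_eq_0_if_vanishes_on_finite_field[OF S(2)] top \<open>k \<in> S\<close> by (cases "k = n") auto
qed

lemma le_floor_divide_iff: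
  assumes "0 < n"
  shows "int j \<le> \<lfloor>real_of_int x / real n\<rfloor> \<longleftrightarrow> int n * int j \<le> x"
proof -
  have "int j \<le> \<lfloor>real_of_int x / real n\<rfloor> \<longleftrightarrow> real n * real j \<le> real_of_int x"
    using assms by (simp add: le_floor_iff pos_le_divide_eq mult.commute)
  also have "\<dots> \<longleftrightarrow> int n * int j \<le> x"
    by (metis of_int_le_iff of_int_mult of_int_of_nat_eq)
  finally show ?thesis .
qed

lemma double_sum_atLeastAtMost:
  "k \<le> M + 1 \<Longrightarrow> 2 * (\<Sum>j=k..M. int j) = int (M + 1 - k) * int (M + k)"
proof (induction M arbitrary: k)
  case 0
  then show ?case
    by (cases k) auto
next
  case (Suc M)
  show ?case
  proof (cases "k = Suc M + 1")
    case False
    then have k: "k \<le> Suc M"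
      using Suc.prems by simp
    have "2 * (\<Sum>j=k..Suc M. int j) = 2 * int (Suc M) + 2 * (\<Sum>j=k..M. int j)"
      using k by (simp add: atLeastAtMostSuc_conv algebra_simps)
    also have "\<dots> = int (Suc M + 1 - k) * int (Suc M + k)"
      using Suc.IH[of k] k by (simp add: of_nat_diff algebra_simps)
    finally show ?thesis .
  qed simp
qed

lemma double_sum_piecewise_linear:
  fixes st Q D E :: int and M :: nat
  assumes "-1 \<le> st" "st \<le> int M"
  shows "2 * (\<Sum>j=0..M. if int j \<le> st then Q else D - E * int j)
    = 2 * (st + 1) * Q + (int M - st) * (2 * D - E * (int M + st + 1))"
proof -
  define k where "k = nat (st + 1)"
  have k: "int k = st + 1" "k \<le> M + 1"
    using assms by (auto simp: k_def)
  have "{0..M} = {0..<k} \<union> {k..M}"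
    using k by auto
  then have split: "(\<Sum>j=0..M. if int j \<le> st then Q else D - E * int j)
      = (\<Sum>j\<in>{0..<k}. if int j \<le> st then Q else D - E * int j)
        + (\<Sum>j=k..M. if int j \<le> st then Q else D - E * int j)"
    by (simp only:) (rule sum.union_disjoint, auto)
  have "(\<Sum>j\<in>{0..<k}. if int j \<le> st then Q else D - E * int j) = (\<Sum>j\<in>{0..<k}. Q)"
    by (rule sum.cong) (use k in auto)
  then have low: "(\<Sum>j\<in>{0..<k}. if int j \<le> st then Q else D - E * int j) = int k * Q"
    by simp
  have "(\<Sum>j=k..M. if int j \<le> st then Q else D - E * int j) = (\<Sum>j=k..M. D - E * int j)"
    by (rule sum.cong) (use k in auto)
  then have high: "(\<Sum>j=k..M. if int j \<le> st then Q else D - E * int j)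
      = int (M + 1 - k) * D - E * (\<Sum>j=k..M. int j)"
    by (simp add: sum_subtractf sum_distrib_left)
  have "2 * (\<Sum>j=k..M. int j) = (int M - st) * (int M + st + 1)"
    using double_sum_atLeastAtMost[OF k(2)] k by (simp add: of_nat_diff)
  then have "2 * (E * (\<Sum>j=k..M. int j)) = E * ((int M - st) * (int M + st + 1))"
    by (metis mult.left_commute)
  moreover have "int (M + 1 - k) = int M - st"
    using k by (simp add: of_nat_diff)
  ultimately show ?thesis
    unfolding split low high using k by (simp add: algebra_simps)
qed

lemma sum_min_linear:
  fixes \<delta> q :: int and \<eta> M :: nat
  assumes "0 < \<eta>"
  defines "s \<equiv> real_of_int (\<delta> - q) / real \<eta>"
  defines "st \<equiv> (if 0 \<le> s \<and> s \<le> real M then \<lfloor>s\<rfloor> else if s < 0 then -1 else int M)"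
  shows "real_of_int (\<Sum>j=0..M. min (\<delta> - int \<eta> * int j) q + 1)
    = real_of_int ((q + 1) * (st + 1))
      + real_of_int (int M - st) * (real_of_int \<delta> + 1 - real \<eta> * real_of_int (int M + st + 1) / 2)"
proof -
  have st_iff: "int j \<le> st \<longleftrightarrow> q \<le> \<delta> - int \<eta> * int j" if "j \<le> M" for j
  proof -
    have floor_iff: "int j \<le> \<lfloor>s\<rfloor> \<longleftrightarrow> int \<eta> * int j \<le> \<delta> - q"
      unfolding s_def by (rule le_floor_divide_iff[OF assms(1)])
    consider "0 \<le> s" "s \<le> real M" | "s < 0" | "real M < s"
      by linarith
    then show ?thesis
    proof cases
      case 1
      then show ?thesis
        using floor_iff by (simp add: st_def) linarith
    next
      case 2
      then have "\<lfloor>s\<rfloor> < 0"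
        by linarith
      then have "\<not> int \<eta> * int j \<le> \<delta> - q"
        using floor_iff by linarith
      then show ?thesis
        using 2 by (simp add: st_def)
    next
      case 3
      then have "int M \<le> \<lfloor>s\<rfloor>"
        by (simp add: le_floor_iff)
      then show ?thesis
        using 3 floor_iff that by (simp add: st_def)
    qed
  qed
  have "-1 \<le> st" "st \<le> int M"
    unfolding st_def by (auto simp: floor_le_iff le_floor_iff)
  moreover have "(\<Sum>j=0..M. min (\<delta> - int \<eta> * int j) q + 1)
      = (\<Sum>j=0..M. if int j \<le> st then q + 1 else (\<delta> + 1) - int \<eta> * int j)"
    by (rule sum.cong) (use st_iff in auto)
  ultimately have "2 * (\<Sum>j=0..M. min (\<delta> - int \<eta> * int j) q + 1)
      = 2 * (st + 1) * (q + 1) + (int M - st) * (2 * (\<delta> + 1) - int \<eta> * (int M + st + 1))"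
    using double_sum_piecewise_linear by simp
  then have "2 * real_of_int (\<Sum>j=0..M. min (\<delta> - int \<eta> * int j) q + 1)
      = real_of_int (2 * (st + 1) * (q + 1)
          + (int M - st) * (2 * (\<delta> + 1) - int \<eta> * (int M + st + 1)))"
    by (metis of_int_mult of_int_numeral)
  then show ?thesis
    by (simp add: field_simps)
qed

definition mono_vec :: "nat \<times> nat \<times> nat \<times> nat \<Rightarrow> 'a::{finite,field} pt4 \<Rightarrow> 'a" where
  "mono_vec e = (\<lambda>P. if P \<in> hirz_points then mon_eval e P else 0)"

lemma hirz_points_mem [simp]:
  "(1, a, 1, b) \<in> hirz_points" "(0, 1, 1, b) \<in> hirz_points"
  "(1, a, 0, 1) \<in> hirz_points" "(0, 1, 0, 1) \<in> hirz_points"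
  by (auto simp: hirz_points_def)

lemma mono_vec_simps [simp]:
  "mono_vec (c1, c2, d1, d2) (1, a, 1, b) = a ^ c2 * b ^ d2"
  "mono_vec (c1, c2, d1, d2) (0, 1, 1, b) = 0 ^ c1 * b ^ d2"
  "mono_vec (c1, c2, d1, d2) (1, a, 0, 1) = a ^ c2 * 0 ^ d1"
  "mono_vec (c1, c2, d1, d2) (0, 1, 0, 1) = 0 ^ c1 * 0 ^ d1"
  "P \<notin> hirz_points \<Longrightarrow> mono_vec e P = 0"
  by (simp_all add: mono_vec_def mon_eval_def)

lemma hirz_fun_eqI:
  fixes F G :: "'a::{finite,field} pt4 \<Rightarrow> 'a"
  assumes "\<And>P. P \<notin> hirz_points \<Longrightarrow> F P = G P"
    and "\<And>a b. F (1, a, 1, b) = G (1, a, 1, b)" "\<And>b. F (0, 1, 1, b) = G (0, 1, 1, b)"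
    and "\<And>a. F (1, a, 0, 1) = G (1, a, 0, 1)" "F (0, 1, 0, 1) = G (0, 1, 0, 1)"
  shows "F = G"
proof
  fix P
  show "F P = G P"
    using assms by (cases "P \<in> hirz_points") (auto simp: hirz_points_def)
qed

lemma hirz_code_eq_span:
  assumes "finite (bideg_exps \<eta> dT dX)"
  shows "(hirz_code \<eta> dT dX :: ('a::{finite,field} pt4 \<Rightarrow> 'a) set)
    = fun_space.span (mono_vec ` bideg_exps \<eta> dT dX)"
proof -
  let ?E = "bideg_exps \<eta> dT dX"
  define comb :: "(nat \<times> nat \<times> nat \<times> nat \<Rightarrow> 'a) \<Rightarrow> 'a pt4 \<Rightarrow> 'a" where
    "comb f = (\<lambda>P. if P \<in> hirz_points then \<Sum>e\<in>?E. f e * mon_eval e P else 0)" for f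
  have code: "hirz_code \<eta> dT dX = range comb"
    by (auto simp: hirz_code_def comb_def)
  have comb_eq_sum: "comb f = (\<Sum>e\<in>?E. (\<lambda>P. f e * mono_vec e P))" for f
    by (auto simp: comb_def fun_eq_iff sum_fun_apply mono_vec_def)
  have "fun_space.subspace (range comb)"
  proof (rule fun_space.subspaceI)
    show "0 \<in> range comb"
      by (rule range_eqI[of _ _ "\<lambda>_. 0"]) (simp add: comb_def fun_eq_iff sum_fun_apply)
    show "x + y \<in> range comb" if x: "x \<in> range comb" and y: "y \<in> range comb" for x y
    proof -
      obtain f g where "x = comb f" "y = comb g"
        using x y by blast
      then have "x + y = comb (\<lambda>e. f e + g e)"
        by (simp add: comb_def fun_eq_iff distrib_right sum.distrib)
      then show ?thesis
        by simp
    qed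
    show "(\<lambda>P. c * x P) \<in> range comb" if x: "x \<in> range comb" for c x
    proof -
      obtain f where "x = comb f"
        using x by blast
      then have "(\<lambda>P. c * x P) = comb (\<lambda>e. c * f e)"
        by (simp add: comb_def fun_eq_iff sum_distrib_left mult.assoc)
      then show ?thesis
        by simp
    qed
  qed
  moreover have "mono_vec ` ?E \<subseteq> range comb"
  proof clarify
    fix e assume "e \<in> ?E"
    then have "(\<Sum>e'\<in>?E. (if e' = e then 1 else 0) * mon_eval e' P) = (mon_eval e P :: 'a)" for P
      using assms by (simp add: if_distrib[of "\<lambda>x. x * _"] sum.delta cong: if_cong)
    then have "mono_vec e = comb (\<lambda>e'. if e' = e then 1 else 0)"
      by (simp add: comb_def mono_vec_def fun_eq_iff)
    then show "mono_vec e \<in> range comb"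
      by simp
  qed
  moreover have "comb f \<in> fun_space.span (mono_vec ` ?E)" for f
    unfolding comb_eq_sum
    by (rule fun_space.span_sum) (auto intro: fun_space.span_scale fun_space.span_base)
  ultimately have "fun_space.span (mono_vec ` ?E) = range comb"
    by (intro fun_space.span_subspace) blast+
  then show ?thesis
    by (simp add: code)
qed

lemma mono_vec_reduce_t2:
  assumes "1 \<le> c2" "c1 = 0 \<longleftrightarrow> c1' = 0"
  shows "(mono_vec (c1, c2 + t * (CARD('a) - 1), d1, d2) :: 'a::{finite,field} pt4 \<Rightarrow> 'a)
    = mono_vec (c1', c2, d1, d2)"
proof -
  have "a ^ (c2 + t * (CARD('a) - 1)) = a ^ c2" for a :: 'a
    using assms(1) by (rule power_add_mult_card_minus_one)
  then show ?thesis
    using assms(2) by (intro hirz_fun_eqI) (auto simp: power_0_left)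
qed

lemma mono_vec_reduce_x2:
  assumes "1 \<le> d2" "1 \<le> d1" "1 \<le> d1'"
  shows "(mono_vec (c1, c2, d1, d2 + t * (CARD('a) - 1)) :: 'a::{finite,field} pt4 \<Rightarrow> 'a)
    = mono_vec (c1, c2, d1', d2)"
proof -
  have "b ^ (d2 + t * (CARD('a) - 1)) = b ^ d2" for b :: 'a
    using assms(1) by (rule power_add_mult_card_minus_one)
  then show ?thesis
    using assms(2,3) by (intro hirz_fun_eqI) (auto simp: power_0_left)
qed

(* Excluding s = 1 is necessary: no binary form of degree q - 1 is 1 on all of P^1(F_q). *)
lemma mono_vec_in_span_raise_tdeg:
  assumes "s \<noteq> 1"
  shows "(mono_vec (c1, c2, d1, d2) :: 'a::{finite,field} pt4 \<Rightarrow> 'a) \<in> fun_space.span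
    {mono_vec (c1', c2', d1, d2) | c1' c2'. c1' + c2' = c1 + c2 + s * (CARD('a) - 1)}"
  (is "_ \<in> fun_space.span ?M")
proof -
  define q where "q = CARD('a)"
  define N where "N = c1 + c2 + s * (q - 1)"
  have q: "2 \<le> q"
    unfolding q_def by (rule card_finite_field_ge_2)
  have in_span: "mono_vec (c1', N - c1', d1, d2) \<in> fun_space.span ?M" if "c1' \<le> N" for c1'
    using that
    by (intro fun_space.span_base CollectI exI[of _ c1'] exI[of _ "N - c1'"])
      (simp add: N_def q_def)
  consider "1 \<le> c2" | "c2 = 0" "1 \<le> c1" | "c1 = 0" "c2 = 0" "s = 0" | "c1 = 0" "c2 = 0" "2 \<le> s"
    using assms by linarith
  then show ?thesis
  proof cases
    case 1
    have "mono_vec (c1, c2 + s * (q - 1), d1, d2) = (mono_vec (c1, c2, d1, d2) :: 'a pt4 \<Rightarrow> 'a)"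
      unfolding q_def by (rule mono_vec_reduce_t2) (use 1 in auto)
    then show ?thesis
      using in_span[of c1] by (simp add: N_def)
  next
    case 2
    have "mono_vec (c1, c2, d1, d2) = (mono_vec (N, 0, d1, d2) :: 'a pt4 \<Rightarrow> 'a)"
      by (intro hirz_fun_eqI) (use 2 in \<open>auto simp: N_def power_0_left\<close>)
    then show ?thesis
      using in_span[of N] by simp
  next
    case 3
    then show ?thesis
      using in_span[of 0] by (simp add: N_def)
  next
    case 4
    have "2 * (q - 1) \<le> s * (q - 1)"
      using 4 by simp
    then have "q \<le> N"
      using q 4 unfolding N_def by linarith
    then obtain k t where k: "1 \<le> k" "k \<le> q - 1" and N: "N = k + t * (q - 1)"
      using exponent_reduction[OF q] q by (metis le_trans one_le_numeral)
    have pow: "(a::'a) ^ N = a ^ k" for a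
      unfolding N q_def by (rule power_add_mult_card_minus_one) fact
    have zero: "(0::'a) ^ N = 0" "(0::'a) ^ (N - k) = 0"
      using \<open>q \<le> N\<close> q k by (simp_all add: power_0_left)
    have "(mono_vec (c1, c2, d1, d2) :: 'a pt4 \<Rightarrow> 'a)
        = mono_vec (N, 0, d1, d2) + mono_vec (0, N, d1, d2) - mono_vec (N - k, k, d1, d2)"
      by (intro hirz_fun_eqI) (use 4 k in \<open>simp_all add: pow zero\<close>)
    also have "\<dots> \<in> fun_space.span ?M"
      using in_span[of N] in_span[of 0] in_span[of "N - k"] k \<open>q \<le> N\<close>
      by (intro fun_space.span_add fun_space.span_diff) simp_all
    finally show ?thesis .
  qed
qed

definition basis_cols :: "nat \<Rightarrow> nat \<Rightarrow> nat set" where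
  "basis_cols q n = {0..min n (q - 1)} \<union> {n}"

lemma finite_basis_cols [simp]: "finite (basis_cols q n)"
  by (simp add: basis_cols_def)

lemma basis_cols_bounds: "basis_cols q n \<subseteq> {..n}" "1 \<le> q \<Longrightarrow> basis_cols q n - {n} \<subseteq> {..<q}"
  by (auto simp: basis_cols_def)

lemma card_basis_cols: "1 \<le> q \<Longrightarrow> card (basis_cols q n) = min n q + 1"
  by (cases "n \<le> q - 1") (auto simp: basis_cols_def min_def insert_absorb)

locale hirz_bidegree =
  fixes \<eta> :: nat and dT :: int and dX :: nat
  assumes delta_nonneg: "0 \<le> dT + int \<eta> * int dX"
begin

definition delta :: int where
  "delta = dT + int \<eta> * int dX"

definition tdeg :: "nat \<Rightarrow> nat" where
  "tdeg j = nat (delta - int \<eta> * int j)"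

definition xmax :: nat where
  "xmax = (if 0 \<le> dT then dX else nat \<lfloor>real_of_int delta / real \<eta>\<rfloor>)"

(* J and S(n_j) of the header are basis_rows q and basis_cols q (tdeg j). *)
definition basis_rows :: "nat \<Rightarrow> nat set" where
  "basis_rows q = {0..min xmax (q - 1)} \<union> (if 0 \<le> dT \<and> q \<le> dX then {dX} else {})"

definition basis_idx :: "nat \<Rightarrow> (nat \<times> nat) set" where
  "basis_idx q = (SIGMA j:basis_rows q. basis_cols q (tdeg j))"

definition basis_exp :: "nat \<times> nat \<Rightarrow> nat \<times> nat \<times> nat \<times> nat" where
  "basis_exp = (\<lambda>(j, c). (tdeg j - c, c, dX - j, j))"

definition basis :: "('a::{finite,field} pt4 \<Rightarrow> 'a) set" where
  "basis = (\<lambda>x. mono_vec (basis_exp x)) ` basis_idx CARD('a)"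

lemma zero_le_delta: "0 \<le> delta"
  using delta_nonneg by (simp add: delta_def)

lemma le_xmax_iff: "j \<le> xmax \<longleftrightarrow> j \<le> dX \<and> int \<eta> * int j \<le> delta"
proof (cases "0 \<le> dT")
  case True
  have "j \<le> dX \<Longrightarrow> int \<eta> * int j \<le> int \<eta> * int dX"
    by (simp add: mult_left_mono)
  then show ?thesis
    using True by (auto simp: xmax_def delta_def)
next
  case False
  then have "0 < \<eta>"
    using zero_le_delta unfolding delta_def by (cases "\<eta> = 0") auto
  have "j \<le> dX" if "int \<eta> * int j \<le> delta"
  proof (rule ccontr)
    assume "\<not> j \<le> dX"
    then have "int \<eta> * int dX \<le> int \<eta> * int j"
      by (simp add: mult_left_mono)
    then show False
      using that False by (simp add: delta_def)
  qed
  moreover have "0 \<le> \<lfloor>real_of_int delta / real \<eta>\<rfloor>"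
    using zero_le_delta by simp
  ultimately show ?thesis
    using False le_floor_divide_iff[OF \<open>0 < \<eta>\<close>, of j delta] by (auto simp: xmax_def le_nat_iff)
qed

lemma xmax_le: "xmax \<le> dX"
  using le_xmax_iff by blast

lemma bideg_exps_iff:
  "(c1, c2, d1, d2) \<in> bideg_exps \<eta> dT dX \<longleftrightarrow> d2 \<le> xmax \<and> d1 = dX - d2 \<and> c1 + c2 = tdeg d2"
proof
  assume "(c1, c2, d1, d2) \<in> bideg_exps \<eta> dT dX"
  then have e: "int c1 + int c2 - int \<eta> * int d1 = dT" "d1 + d2 = dX"
    by (auto simp: bideg_exps_def)
  then have "int \<eta> * int dX = int \<eta> * int d1 + int \<eta> * int d2"
    by (metis distrib_left of_nat_add)
  then have "int c1 + int c2 = delta - int \<eta> * int d2"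
    using e(1) by (simp add: delta_def algebra_simps)
  then show "d2 \<le> xmax \<and> d1 = dX - d2 \<and> c1 + c2 = tdeg d2"
    using e(2) le_xmax_iff[of d2] by (auto simp: tdeg_def)
next
  assume e: "d2 \<le> xmax \<and> d1 = dX - d2 \<and> c1 + c2 = tdeg d2"
  then have "d2 \<le> dX" "int \<eta> * int d2 \<le> delta"
    using le_xmax_iff by blast+
  then have "int c1 + int c2 = delta - int \<eta> * int d2" "int d1 = int dX - int d2"
    using e by (auto simp: tdeg_def)
  then show "(c1, c2, d1, d2) \<in> bideg_exps \<eta> dT dX"
    using e \<open>d2 \<le> dX\<close> by (simp add: bideg_exps_def delta_def algebra_simps)
qed

lemma finite_bideg_exps: "finite (bideg_exps \<eta> dT dX)"
proof (rule finite_subset)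
  let ?N = "nat delta"
  show "bideg_exps \<eta> dT dX \<subseteq> {..?N} \<times> {..?N} \<times> {..dX} \<times> {..dX}"
  proof
    fix e assume e: "e \<in> bideg_exps \<eta> dT dX"
    obtain c1 c2 d1 d2 where "e = (c1, c2, d1, d2)"
      by (cases e)
    moreover have "tdeg d2 \<le> ?N"
      by (simp add: tdeg_def nat_mono)
    ultimately show "e \<in> {..?N} \<times> {..?N} \<times> {..dX} \<times> {..dX}"
      using e xmax_le by (auto simp: bideg_exps_iff)
  qed
qed simp

lemma basis_rows_bounds: "basis_rows q \<subseteq> {..xmax}" "1 \<le> q \<Longrightarrow> basis_rows q - {dX} \<subseteq> {..<q}"
  by (auto simp: basis_rows_def xmax_def)

lemma basis_exp_in_bideg_exps:
  assumes "x \<in> basis_idx q"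
  shows "basis_exp x \<in> bideg_exps \<eta> dT dX"
  using assms
  by (auto simp: basis_idx_def basis_exp_def bideg_exps_iff
      dest!: subsetD[OF basis_rows_bounds(1)] subsetD[OF basis_cols_bounds(1)])

lemma mono_vec_in_basis_if_row:
  assumes e: "(c1, c2, d1, d2) \<in> bideg_exps \<eta> dT dX" and row: "d2 \<in> basis_rows CARD('a)"
  shows "(mono_vec (c1, c2, d1, d2) :: 'a::{finite,field} pt4 \<Rightarrow> 'a) \<in> basis"
proof -
  define q where "q = CARD('a)"
  have q: "2 \<le> q"
    unfolding q_def by (rule card_finite_field_ge_2)
  define n where "n = tdeg d2"
  have e': "d1 = dX - d2" "c1 + c2 = n"
    using e by (simp_all add: bideg_exps_iff n_def)
  have in_basis: "(mono_vec (n - c, c, d1, d2) :: 'a pt4 \<Rightarrow> 'a) \<in> basis"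
    if "c \<in> basis_cols q n" for c
    using row that e'(1) unfolding basis_def basis_idx_def basis_exp_def n_def q_def
    by (auto intro!: image_eqI[of _ _ "(d2, c)"])
  show ?thesis
  proof (cases "c2 \<in> basis_cols q n")
    case True
    then show ?thesis
      using in_basis e'(2) by (metis add_diff_cancel_right')
  next
    case False
    then have "q \<le> c2" "c2 < n"
      using e'(2) q by (auto simp: basis_cols_def)
    then have "1 \<le> c2"
      using q by linarith
    then obtain r t where r: "1 \<le> r" "r \<le> q - 1" and c2: "c2 = r + t * (q - 1)"
      using exponent_reduction[OF q] by blast
    have "mono_vec (c1, c2, d1, d2) = (mono_vec (n - r, r, d1, d2) :: 'a pt4 \<Rightarrow> 'a)"
      unfolding c2 q_def by (rule mono_vec_reduce_t2) (use r \<open>q \<le> c2\<close> \<open>c2 < n\<close> e'(2) in auto)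
    also have "\<dots> \<in> basis"
      by (rule in_basis) (use r \<open>q \<le> c2\<close> \<open>c2 < n\<close> in \<open>simp add: basis_cols_def\<close>)
    finally show ?thesis .
  qed
qed

lemma mono_vec_in_span_basis_if_not_row:
  assumes "\<eta> \<noteq> 1" and e: "(c1, c2, d1, d2) \<in> bideg_exps \<eta> dT dX"
    and not_row: "d2 \<notin> basis_rows CARD('a)"
  shows "(mono_vec (c1, c2, d1, d2) :: 'a::{finite,field} pt4 \<Rightarrow> 'a) \<in> fun_space.span basis"
proof -
  define q where "q = CARD('a)"
  have q: "2 \<le> q"
    unfolding q_def by (rule card_finite_field_ge_2)
  have e': "d2 \<le> xmax" "d1 = dX - d2" "c1 + c2 = tdeg d2"
    using e by (simp_all add: bideg_exps_iff)
  have "q \<le> d2"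
    using not_row e'(1) by (auto simp: basis_rows_def q_def)
  have "d2 \<noteq> dX"
  proof
    assume "d2 = dX"
    then have "0 \<le> dT"
      using e'(1) le_xmax_iff by (simp add: delta_def)
    then show False
      using not_row \<open>d2 = dX\<close> \<open>q \<le> d2\<close> by (simp add: basis_rows_def q_def)
  qed
  then have "1 \<le> d1"
    using e' xmax_le by simp
  have "1 \<le> d2"
    using \<open>q \<le> d2\<close> q by linarith
  then obtain j t where j: "1 \<le> j" "j \<le> q - 1" and d2: "d2 = j + t * (q - 1)"
    using exponent_reduction[OF q] by blast
  have "1 \<le> t"
    using d2 j \<open>q \<le> d2\<close> by (cases t) auto
  have "j \<le> xmax"
    using j \<open>q \<le> d2\<close> e'(1) by linarith
  have row: "j \<in> basis_rows q"
    using \<open>j \<le> xmax\<close> j by (auto simp: basis_rows_def)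
  have "int \<eta> * int d2 = int \<eta> * int j + int (\<eta> * t * (q - 1))"
    using d2 by (metis distrib_left mult.assoc of_nat_add of_nat_mult)
  then have "delta - int \<eta> * int j = (delta - int \<eta> * int d2) + int (\<eta> * t * (q - 1))"
    by simp
  then have "tdeg j = nat ((delta - int \<eta> * int d2) + int (\<eta> * t * (q - 1)))"
    by (simp only: tdeg_def)
  also have "\<dots> = tdeg d2 + \<eta> * t * (q - 1)"
    unfolding tdeg_def using e'(1) le_xmax_iff[of d2]
    by (subst nat_add_distrib) (auto simp: nat_mult_distrib)
  finally have tdeg_j: "tdeg j = c1 + c2 + \<eta> * t * (q - 1)"
    using e'(3) by simp
  have "mono_vec (c1, c2, d1, d2) = (mono_vec (c1, c2, dX - j, j) :: 'a pt4 \<Rightarrow> 'a)"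
    unfolding d2 q_def
    by (rule mono_vec_reduce_x2) (use j \<open>1 \<le> d1\<close> \<open>q \<le> d2\<close> e'(1) xmax_le in auto)
  also have "\<dots> \<in> fun_space.span
      {mono_vec (c1', c2', dX - j, j) | c1' c2'. c1' + c2' = c1 + c2 + \<eta> * t * (q - 1)}"
    unfolding q_def by (rule mono_vec_in_span_raise_tdeg) (use \<open>\<eta> \<noteq> 1\<close> in simp)
  also have "\<dots> \<subseteq> fun_space.span basis"
  proof (rule fun_space.span_mono, clarify)
    fix c1' c2' assume "c1' + c2' = c1 + c2 + \<eta> * t * (q - 1)"
    then have "(c1', c2', dX - j, j) \<in> bideg_exps \<eta> dT dX"
      using \<open>j \<le> xmax\<close> tdeg_j by (simp add: bideg_exps_iff)
    then show "(mono_vec (c1', c2', dX - j, j) :: 'a pt4 \<Rightarrow> 'a) \<in> basis"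
      by (rule mono_vec_in_basis_if_row) (use row in \<open>simp add: q_def\<close>)
  qed
  finally show ?thesis .
qed

lemma bideg_mono_vecs_subset_span_basis:
  assumes "\<eta> \<noteq> 1"
  shows "(mono_vec ` bideg_exps \<eta> dT dX :: ('a::{finite,field} pt4 \<Rightarrow> 'a) set)
    \<subseteq> fun_space.span basis"
proof clarify
  fix c1 c2 d1 d2 assume e: "(c1, c2, d1, d2) \<in> bideg_exps \<eta> dT dX"
  show "(mono_vec (c1, c2, d1, d2) :: 'a pt4 \<Rightarrow> 'a) \<in> fun_space.span basis"
  proof (cases "d2 \<in> basis_rows CARD('a)")
    case True
    then show ?thesis
      using mono_vec_in_basis_if_row[OF e] fun_space.span_base by blast
  next
    case False
    then show ?thesis
      by (rule mono_vec_in_span_basis_if_not_row[OF assms e])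
  qed
qed

lemma basis_relation_trivial:
  fixes u :: "nat \<times> nat \<Rightarrow> 'a::{finite,field}"
  assumes rel: "(\<Sum>x\<in>basis_idx CARD('a). (\<lambda>P. u x * mono_vec (basis_exp x) P)) = 0"
    and x: "x \<in> basis_idx CARD('a)"
  shows "u x = 0"
proof -
  define q where "q = CARD('a)"
  have q: "1 \<le> q"
    using card_finite_field_ge_2[where 'a = 'a] by (simp add: q_def)
  define \<Phi> where "\<Phi> j a = (\<Sum>c\<in>basis_cols q (tdeg j). u (j, c) * a ^ c)" for j and a :: 'a
  define \<Psi> where "\<Psi> j = (\<Sum>c\<in>basis_cols q (tdeg j). u (j, c) * (0::'a) ^ (tdeg j - c))" for j
  have eval: "(\<Sum>j\<in>basis_rows q. \<Sum>c\<in>basis_cols q (tdeg j).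
      u (j, c) * mono_vec (tdeg j - c, c, dX - j, j) P) = 0" for P :: "'a pt4"
    using fun_cong[OF rel, of P] finite_subset[OF basis_rows_bounds(1)]
    unfolding basis_idx_def basis_exp_def q_def
    by (simp add: sum_fun_apply sum.Sigma case_prod_unfold)
  have "(\<Sum>j\<in>basis_rows q. \<Phi> j a * b ^ j) = 0" "(\<Sum>j\<in>basis_rows q. \<Psi> j * b ^ j) = 0"
    "(\<Sum>j\<in>basis_rows q. \<Phi> j a * 0 ^ (dX - j)) = 0" "(\<Sum>j\<in>basis_rows q. \<Psi> j * 0 ^ (dX - j)) = 0"
    for a b
    using eval[of "(1, a, 1, b)"] eval[of "(0, 1, 1, b)"]
      eval[of "(1, a, 0, 1)"] eval[of "(0, 1, 0, 1)"]
    by (simp_all add: \<Phi>_def \<Psi>_def sum_distrib_right mult.assoc)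
  moreover have rows: "basis_rows q \<subseteq> {..dX}" "basis_rows q - {dX} \<subseteq> {..<CARD('a)}"
    using basis_rows_bounds(1)[of q] basis_rows_bounds(2)[OF q] xmax_le by (auto simp: q_def)
  ultimately have row_zero: "\<Phi> j a = 0" "\<Psi> j = 0" if "j \<in> basis_rows q" for j a
    using that by (auto intro: coeff_eq_0_if_vanishes_on_proj_line[OF rows])
  obtain j c where x_eq: "x = (j, c)" and j: "j \<in> basis_rows q" and c: "c \<in> basis_cols q (tdeg j)"
    using x by (auto simp: basis_idx_def q_def)
  have "basis_cols q (tdeg j) - {tdeg j} \<subseteq> {..<CARD('a)}"
    using basis_cols_bounds(2)[OF q] by (simp add: q_def)
  then have "u (j, c) = 0"
    using coeff_eq_0_if_vanishes_on_proj_line[OF basis_cols_bounds(1) _ _ _ c, of "\<lambda>c. u (j, c)"]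
      row_zero[OF j] by (simp add: \<Phi>_def \<Psi>_def)
  then show ?thesis
    by (simp add: x_eq)
qed

lemma code_dim_eq_card_basis_idx:
  assumes "\<eta> \<noteq> 1"
  shows "code_dim (hirz_code \<eta> dT dX :: ('a::{finite,field} pt4 \<Rightarrow> 'a) set)
    = card (basis_idx CARD('a))"
proof -
  let ?M = "mono_vec ` bideg_exps \<eta> dT dX :: ('a pt4 \<Rightarrow> 'a) set"
  let ?g = "\<lambda>x. mono_vec (basis_exp x) :: 'a pt4 \<Rightarrow> 'a"
  have fin: "finite (basis_idx CARD('a))"
    using finite_subset[OF basis_rows_bounds(1)] by (simp add: basis_idx_def)
  have trivial: "u x = 0"
    if "(\<Sum>y\<in>basis_idx CARD('a). (\<lambda>P. u y * ?g y P)) = 0" "x \<in> basis_idx CARD('a)" for u x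
    using that by (rule basis_relation_trivial)
  have inj: "inj_on ?g (basis_idx CARD('a))"
    using fin trivial by (rule fun_space.linearly_independent_family)
  have indep: "fun_space.independent (?g ` basis_idx CARD('a))"
    using fin trivial by (rule fun_space.linearly_independent_family)
  have "card (basis :: ('a pt4 \<Rightarrow> 'a) set) = fun_space.dim (fun_space.span ?M)"
  proof (rule fun_space.basis_card_eq_dim)
    show "basis \<subseteq> fun_space.span ?M"
      using basis_exp_in_bideg_exps by (auto simp: basis_def intro: fun_space.span_base)
    show "fun_space.span ?M \<subseteq> fun_space.span basis"
      using bideg_mono_vecs_subset_span_basis[OF assms] fun_space.span_minimal by blast
    show "fun_space.independent (basis :: ('a pt4 \<Rightarrow> 'a) set)"
      using indep by (simp add: basis_def)
  qed
  moreover have "card (basis :: ('a pt4 \<Rightarrow> 'a) set) = card (basis_idx CARD('a))"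
    unfolding basis_def by (rule card_image[OF inj])
  ultimately show ?thesis
    by (simp add: code_dim_def hirz_code_eq_span[OF finite_bideg_exps])
qed

lemma card_basis_idx:
  assumes "1 \<le> q"
  shows "card (basis_idx q) = (\<Sum>j=0..min xmax (q - 1). min (tdeg j) q + 1)
    + (if 0 \<le> dT \<and> q \<le> dX then min (nat dT) q + 1 else 0)"
proof -
  have "card (basis_idx q) = (\<Sum>j\<in>basis_rows q. min (tdeg j) q + 1)"
    using assms finite_subset[OF basis_rows_bounds(1)]
    by (simp add: basis_idx_def card_SigmaI card_basis_cols)
  moreover have "tdeg dX = nat dT"
    by (simp add: tdeg_def delta_def)
  ultimately show ?thesis
    using assms by (auto simp: basis_rows_def add.commute xmax_def)
qed

lemma code_dim_eq_sum:
  assumes "\<eta> \<noteq> 1"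
  shows "int (code_dim (hirz_code \<eta> dT dX :: ('a::{finite,field} pt4 \<Rightarrow> 'a) set))
    = (\<Sum>j=0..min xmax (CARD('a) - 1). min (delta - int \<eta> * int j) (int CARD('a)) + 1)
      + (if 0 \<le> dT \<and> CARD('a) \<le> dX then min dT (int CARD('a)) + 1 else 0)"
proof -
  define q where "q = CARD('a)"
  have "1 \<le> q"
    using card_finite_field_ge_2[where 'a = 'a] by (simp add: q_def)
  have "int (\<Sum>j=0..min xmax (q - 1). min (tdeg j) q + 1)
      = (\<Sum>j=0..min xmax (q - 1). min (delta - int \<eta> * int j) (int q) + 1)"
    unfolding of_nat_sum
  proof (rule sum.cong)
    fix j assume "j \<in> {0..min xmax (q - 1)}"
    then have "int \<eta> * int j \<le> delta"
      using le_xmax_iff by auto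
    then show "int (min (tdeg j) q + 1) = min (delta - int \<eta> * int j) (int q) + 1"
      by (auto simp: tdeg_def min_def)
  qed simp
  moreover have "0 \<le> dT \<Longrightarrow> int (min (nat dT) q + 1) = min dT (int q) + 1"
    by (auto simp: min_def)
  ultimately show ?thesis
    unfolding q_def[symmetric] code_dim_eq_card_basis_idx[OF assms] card_basis_idx[OF \<open>1 \<le> q\<close>]
    by simp
qed

lemma code_dim_eta_0:
  assumes "\<eta> = 0"
  shows "int (code_dim (hirz_code \<eta> dT dX :: ('a::{finite,field} pt4 \<Rightarrow> 'a) set))
    = (min dT (int CARD('a)) + 1) * (min (int dX) (int CARD('a)) + 1)"
proof -
  have "delta = dT" "xmax = dX" "0 \<le> dT"
    using assms delta_nonneg unfolding delta_def xmax_def by simp_all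
  then have "int (code_dim (hirz_code \<eta> dT dX :: ('a pt4 \<Rightarrow> 'a) set))
      = (int (min dX (CARD('a) - 1)) + 1) * (min dT (int CARD('a)) + 1)
        + (if CARD('a) \<le> dX then min dT (int CARD('a)) + 1 else 0)"
    using code_dim_eq_sum[where 'a = 'a] assms by simp
  also have "\<dots> = (min dT (int CARD('a)) + 1) * (min (int dX) (int CARD('a)) + 1)"
    using card_finite_field_ge_2[where 'a = 'a]
    by (cases "CARD('a) \<le> dX") (simp_all add: of_nat_diff algebra_simps)
  finally show ?thesis .
qed

lemma floor_eq_xmax: "\<lfloor>if 0 \<le> dT then real dX else real_of_int delta / real \<eta>\<rfloor> = int xmax"
  using zero_le_delta by (simp add: xmax_def)

lemma code_dim_eta_ge_2:
  assumes "2 \<le> \<eta>"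
  defines "M \<equiv> min xmax (CARD('a::{finite,field}) - 1)"
    and "s \<equiv> real_of_int (delta - int CARD('a)) / real \<eta>"
  defines "st \<equiv> (if 0 \<le> s \<and> s \<le> real M then \<lfloor>s\<rfloor> else if s < 0 then -1 else int M)"
  shows "real (code_dim (hirz_code \<eta> dT dX :: ('a pt4 \<Rightarrow> 'a) set))
    = real_of_int ((int CARD('a) + 1) * (st + 1))
      + real_of_int (int M - st)
        * (real_of_int delta + 1 - real \<eta> * real_of_int (int M + st + 1) / 2)
      + real_of_int (if 0 \<le> dT \<and> CARD('a) \<le> dX then min dT (int CARD('a)) + 1 else 0)"
proof -
  have "real (code_dim (hirz_code \<eta> dT dX :: ('a pt4 \<Rightarrow> 'a) set))
      = real_of_int (\<Sum>j=0..M. min (delta - int \<eta> * int j) (int CARD('a)) + 1)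
        + real_of_int (if 0 \<le> dT \<and> CARD('a) \<le> dX then min dT (int CARD('a)) + 1 else 0)"
    using assms(1) unfolding M_def of_int_add[symmetric]
    by (subst code_dim_eq_sum[where 'a = 'a, symmetric]) simp_all
  then show ?thesis
    using sum_min_linear[of \<eta> delta "int CARD('a)" M] assms(1) by (simp add: s_def st_def)
qed

end

theorem proposition2p23:
  fixes \<eta> :: nat and dT :: int and dX :: nat
  assumes "dT + int \<eta> * int dX \<ge> 0"
  shows "(\<eta> = 0 \<longrightarrow>
            int (code_dim (hirz_code \<eta> dT dX :: ('a::{finite,field} pt4 \<Rightarrow> 'a) set))
              = (min dT (int CARD('a)) + 1) * (min (int dX) (int CARD('a)) + 1))
       \<and> (\<eta> \<ge> 2 \<longrightarrow>
          (let q = int CARD('a);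
               \<delta> = dT + int \<eta> * int dX;
               A = (if dT \<ge> 0 then real dX else real_of_int \<delta> / real \<eta>);
               m = min \<lfloor>A\<rfloor> (q - 1);
               h = (if dT \<ge> 0 \<and> q \<le> int dX then min dT q + 1 else 0);
               s = real_of_int (\<delta> - q) / real \<eta>;
               st = (if 0 \<le> s \<and> s \<le> real_of_int m then \<lfloor>s\<rfloor>
                     else if s < 0 then -1 else m)
           in real (code_dim (hirz_code \<eta> dT dX :: ('a pt4 \<Rightarrow> 'a) set))
              = real_of_int ((q + 1) * (st + 1))
                + real_of_int (m - st) * (real_of_int \<delta> + 1 - real \<eta> * real_of_int (m + st + 1) / 2)
                + real_of_int h))"
proof -
  interpret hirz_bidegree \<eta> dT dX
    by unfold_locales (rule assms)
  have m: "min (int xmax) (int CARD('a) - 1) = int (min xmax (CARD('a) - 1))"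
    using card_finite_field_ge_2[where 'a = 'a] by linarith
  show ?thesis
    using code_dim_eta_0[where 'a = 'a] code_dim_eta_ge_2[where 'a = 'a]
    unfolding Let_def delta_def[symmetric] floor_eq_xmax m of_nat_le_iff of_int_of_nat_eq by blast
qed

end
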